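(* Let $f\in\mathcal{H}$ be nonzero and let $J\subset\Omega(f)$ be an interval such that $f(x)<0$ for all $x\in J$. Then there exists $g\in\mathcal{H}$ such that $f=p_J\,g$.
   Context: $\mathbb{C}^+=\{z:\Im z>0\}$, $\mathcal{H}$ is the set of analytic maps $\mathbb{C}^+\to\overline{\mathbb{C}^+}$. For $f\in\mathcal{H}$ with Nevanlinna representation $f(z)=\alpha z+\beta+\int_{\mathbb{R}}\frac{1+zt}{t-z}\,d\rho(t)$ ($\alpha\ge0,\beta\in\mathbb{R}$, $\rho$ finite positive Borel), $\sigma(f)$ is the closed support of $\rho$ with $\infty$ added if $\alpha>0$ or the support is unbounded, and $\Omega(f)=(\mathbb{R}\cup\{\infty\})\setminus\sigma(f)$; $f$ extends analytically to $(\mathbb{C}\cup\{\infty\})\setminus\sigma(f)$ and is real on $\Omega(f)$. Intervals in $\mathbb{R}\cup\{\infty\}$: for $b>a$, $(b,a)=(b,\infty)\cup\{\infty\}\cup(-\infty,a)$. For a proper open interval $J$, $p_J$ is the unique conformal automorphism of $\mathbb{C}^+$ which is negative exactly on $J$ and has $|p_J(i)|=1$; explicitly $p_{(b,a)}(z)=\frac{|i-b|}{|i-a|}\frac{z-a}{z-b}$ for finite $b<a$, $p_{(-\infty,a)}(z)=\frac{z-a}{|i-a|}$, and $p_J=-1/p_{J'}$ when $J$ is the complement of $\overline{J'}$ with $J'$ of the preceding types. *)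

theory Defs
  imports "HOL-Analysis.Analysis"
begin

definition upper_half :: "complex set" where
  "upper_half = {z. Im z > 0}"

definition nevanlinna_class :: "(complex \<Rightarrow> complex) \<Rightarrow> bool" where
  "nevanlinna_class f \<longleftrightarrow>
     f holomorphic_on upper_half \<and> (\<forall>z\<in>upper_half. Im (f z) \<ge> 0)"

definition nevanlinna_rep ::
  "(complex \<Rightarrow> complex) \<Rightarrow> real \<Rightarrow> real \<Rightarrow> real measure \<Rightarrow> bool" where
  "nevanlinna_rep f \<alpha> \<beta> \<rho> \<longleftrightarrow>
     \<alpha> \<ge> 0 \<and> finite_measure \<rho> \<and> sets \<rho> = sets borel \<and>
     (\<forall>z\<in>upper_half.
        f z = of_real \<alpha> * z + of_real \<beta> +
              (LINT t|\<rho>. (1 + z * of_real t) / (of_real t - z)))"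

definition measure_support :: "real measure \<Rightarrow> real set" where
  "measure_support \<rho> = {t. \<forall>e>0. emeasure \<rho> {t - e<..<t + e} > 0}"

text \<open>Points of the extended real line R \<union> {\<infinity>} are modelled as real option,
  with None standing for \<infinity>.\<close>

definition sigma_set :: "(complex \<Rightarrow> complex) \<Rightarrow> real option set" where
  "sigma_set f =
     (let (\<alpha>, \<beta>, \<rho>) = (SOME (\<alpha>, \<beta>, \<rho>). nevanlinna_rep f \<alpha> \<beta> \<rho>)
      in Some ` measure_support \<rho> \<union>
         (if \<alpha> > 0 \<or> \<not> bounded (measure_support \<rho>) then {None} else {}))"

definition Omega_set :: "(complex \<Rightarrow> complex) \<Rightarrow> real option set" where
  "Omega_set f = UNIV - sigma_set f"

text \<open>Value of (the analytic extension of) f at a point of R \<union> {\<infinity>}: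
  the boundary limit from C+.\<close>

definition ext_val :: "(complex \<Rightarrow> complex) \<Rightarrow> real option \<Rightarrow> complex" where
  "ext_val f x = (case x of
      Some r \<Rightarrow> Lim (at (of_real r) within upper_half) f
    | None \<Rightarrow> Lim (inf at_infinity (principal upper_half)) f)"

text \<open>Proper open interval (arc) of R \<union> {\<infinity>} from endpoint c to endpoint d
  (c \<noteq> d), traversed in the increasing direction; for finite c > d it wraps through \<infinity>.\<close>

fun arc :: "real option \<Rightarrow> real option \<Rightarrow> real option set" where
  "arc (Some c) (Some d) =
     (if c < d then Some ` {c<..<d}
      else if d < c then Some ` {c<..} \<union> {None} \<union> Some ` {..<d}
      else {})"
| "arc None (Some d) = Some ` {..<d}"
| "arc (Some c) None = Some ` {c<..}"
| "arc None None = {}"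

text \<open>The normalized automorphism p_J of C+ negative exactly on J = arc c d,
  given by the explicit formulas.\<close>

fun pJ :: "real option \<Rightarrow> real option \<Rightarrow> complex \<Rightarrow> complex" where
  "pJ (Some c) (Some d) z =
     (if c < d then of_real (cmod (\<i> - of_real c) / cmod (\<i> - of_real d)) *
                    (z - of_real d) / (z - of_real c)
      else - (of_real (cmod (\<i> - of_real c) / cmod (\<i> - of_real d)) *
                    (z - of_real d) / (z - of_real c)))"
| "pJ None (Some d) z = (z - of_real d) / of_real (cmod (\<i> - of_real d))"
| "pJ (Some c) None z = - (of_real (cmod (\<i> - of_real c)) / (z - of_real c))"
| "pJ None None z = 0"

end

theory Submission
  imports Defs "HOL-Probability.Probability" "HOL-Complex_Analysis.Complex_Analysis"
begin

text \<open>By Herglotz's theorem (obtained from the version on the disc, via Helly's selection theorem)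
  f z = \<alpha> z + \<beta> + \<integral> (1 + z t) / (t - z) d\<rho>(t). As J \<subseteq> \<Omega>(f), the measure \<rho> does not charge J,
  so at each x0 \<in> J the function f has the real boundary value F(x0) < 0 and
  f z = F(x0) + (z - x0) (\<alpha> + \<integral> (1 + t^2) / ((t - z) (t - x0)) d\<rho>(t)).
  For an affine a z + b vanishing at the left end of J with (a t + b) (t - x0) \<ge> 0 off J, each term of
  f z (a z + b) / (z - x0) then has nonnegative imaginary part. Letting x0 tend to the right end of J
  gives Im (f / p_J) \<ge> 0, so g = f / p_J.\<close>

section \<open>The Nevanlinna kernel\<close>

definition nevanlinna_kernel :: "complex \<Rightarrow> real \<Rightarrow> complex" where
  "nevanlinna_kernel z t = (1 + z * of_real t) / (of_real t - z)"

definition difference_kernel :: "real \<Rightarrow> complex \<Rightarrow> real \<Rightarrow> complex" where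
  "difference_kernel x0 z t = of_real (1 + t^2) / ((of_real t - z) * (of_real t - of_real x0))"

lemma nevanlinna_kernel_measurable [measurable]: "nevanlinna_kernel z \<in> borel_measurable borel"
  unfolding nevanlinna_kernel_def by measurable

lemma difference_kernel_measurable [measurable]: "difference_kernel x0 z \<in> borel_measurable borel"
  unfolding difference_kernel_def by measurable

lemma Im_affine_div_real_minus:
  fixes z :: complex and a b t :: real
  shows "Im ((of_real a * z + of_real b) / (of_real t - z)) = (a * t + b) * Im z / (cmod (of_real t - z))^2"
proof -
  have "(cmod (of_real t - z))^2 = (t - Re z)^2 + (Im z)^2" by (simp add: cmod_power2)
  then show ?thesis by (simp add: Im_divide power2_eq_square algebra_simps)
qed

lemma Im_le_norm_real_minus: "Im z \<le> cmod (of_real t - z)"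
  using abs_Im_le_cmod[of "of_real t - z"] by simp

lemma norm_nevanlinna_kernel_le:
  assumes "e \<le> cmod (of_real t - z)" "e > 0"
  shows "norm (nevanlinna_kernel z t) \<le> cmod (1 + z^2) / e + cmod z"
proof -
  have "of_real t - z \<noteq> 0" using assms by auto
  then have "nevanlinna_kernel z t = (1 + z^2) / (of_real t - z) + z"
    by (simp add: nevanlinna_kernel_def field_simps power2_eq_square)
  also have "norm \<dots> \<le> cmod ((1 + z^2) / (of_real t - z)) + cmod z" by (rule norm_triangle_ineq)
  also have "cmod ((1 + z^2) / (of_real t - z)) \<le> cmod (1 + z^2) / e"
    using assms by (simp add: norm_divide) (rule divide_left_mono, auto intro!: mult_pos_pos)
  finally show ?thesis by simp
qed

lemma nevanlinna_kernel_diff: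
  assumes "of_real t \<noteq> z" "t \<noteq> x0"
  shows "nevanlinna_kernel z t - nevanlinna_kernel (of_real x0) t = (z - of_real x0) * difference_kernel x0 z t"
proof -
  have "of_real t - z \<noteq> 0" using assms by auto
  moreover have "(of_real t - of_real x0 :: complex) \<noteq> 0" using assms by simp
  ultimately show ?thesis
    by (simp add: nevanlinna_kernel_def difference_kernel_def field_simps power2_eq_square)
qed

lemma one_plus_square_div_square_le:
  fixes t x0 e :: real
  assumes "e > 0" "e \<le> \<bar>t - x0\<bar>"
  shows "(1 + t^2) / (t - x0)^2 \<le> (1 + 2 * x0^2) / e^2 + 2"
proof -
  have "e^2 \<le> \<bar>t - x0\<bar>^2" by (rule power_mono) (use assms in auto)
  then have e2: "e^2 \<le> (t - x0)^2" by simp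
  have pos: "(t - x0)^2 > 0" using e2 assms(1) zero_less_power[of e 2] by linarith
  have "(1 + 2 * x0^2) + 2 * (t - x0)^2 - (1 + t^2) = (t - 2 * x0)^2"
    by (simp add: power2_eq_square algebra_simps)
  then have "1 + t^2 \<le> (1 + 2 * x0^2) + 2 * (t - x0)^2"
    using zero_le_power2[of "t - 2 * x0"] by linarith
  then have "(1 + t^2) / (t - x0)^2 \<le> ((1 + 2 * x0^2) + 2 * (t - x0)^2) / (t - x0)^2"
    using pos by (simp add: divide_right_mono)
  also have "\<dots> = (1 + 2 * x0^2) / (t - x0)^2 + 2" using pos by (simp add: add_divide_distrib)
  also have "(1 + 2 * x0^2) / (t - x0)^2 \<le> (1 + 2 * x0^2) / e^2"
    using e2 assms by (intro divide_left_mono) (auto simp: add_pos_nonneg)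
  finally show ?thesis by simp
qed

lemma norm_difference_kernel_le:
  assumes "e > 0" "e \<le> \<bar>t - x0\<bar>" "cmod (z - of_real x0) \<le> e / 2"
  shows "norm (difference_kernel x0 z t) \<le> 2 * ((1 + 2 * x0^2) / e^2 + 2)"
proof -
  have "\<bar>t - x0\<bar> \<le> cmod (of_real t - z) + cmod (z - of_real x0)"
    using norm_triangle_ineq[of "of_real t - z" "z - of_real x0"] by (simp flip: of_real_diff)
  moreover have "cmod (z - of_real x0) \<le> \<bar>t - x0\<bar> / 2" using assms(2,3) by argo
  ultimately have near: "\<bar>t - x0\<bar> / 2 \<le> cmod (of_real t - z)" by argo
  have tx: "\<bar>t - x0\<bar> > 0" using assms by linarith
  have "norm (difference_kernel x0 z t) = (1 + t^2) / (cmod (of_real t - z) * \<bar>t - x0\<bar>)"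
    unfolding difference_kernel_def norm_divide norm_mult of_real_diff[symmetric] norm_of_real
    by (simp add: abs_of_nonneg)
  also have "\<dots> \<le> (1 + t^2) / (\<bar>t - x0\<bar> / 2 * \<bar>t - x0\<bar>)"
    using near tx by (intro frac_le mult_right_mono mult_pos_pos) (auto simp: add_nonneg_nonneg)
  also have "\<dots> = 2 * ((1 + t^2) / (t - x0)^2)" using tx by (simp add: power2_eq_square field_simps)
  also have "\<dots> \<le> 2 * ((1 + 2 * x0^2) / e^2 + 2)"
    using one_plus_square_div_square_le[OF assms(1,2)] by (rule mult_left_mono) simp
  finally show ?thesis .
qed

lemma Im_of_real_mult: "Im (of_real c * w) = c * Im w"
  by simp

lemma Im_affine_mult_difference_kernel:
  fixes a b t x0 :: real
  shows "Im ((of_real a * z + of_real b) * difference_kernel x0 z t) =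
    ((1 + t^2) / (t - x0)) * ((a * t + b) * Im z / (cmod (of_real t - z))^2)"
proof -
  have "(of_real a * z + of_real b) * difference_kernel x0 z t =
      of_real ((1 + t^2) / (t - x0)) * ((of_real a * z + of_real b) / (of_real t - z))"
    unfolding difference_kernel_def by (simp add: divide_simps flip: of_real_diff)
  then show ?thesis by (simp only: Im_of_real_mult Im_affine_div_real_minus)
qed

lemma measurable_if_sets_borel:
  assumes "sets \<rho> = sets (borel :: real measure)" "g \<in> borel_measurable borel"
  shows "g \<in> borel_measurable \<rho>"
  by (subst measurable_cong_sets[OF assms(1) refl]) (rule assms(2))

lemma AE_in_measure_support:
  fixes \<rho> :: "real measure"
  assumes sets: "sets \<rho> = sets borel"
  shows "AE t in \<rho>. t \<in> measure_support \<rho>"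
proof -
  define I where "I = {(a, b). a \<in> \<rat> \<and> b \<in> \<rat> \<and> emeasure \<rho> {a<..<b::real} = 0}"
  define N where "N = (\<Union>(a, b)\<in>I. {a<..<b})"
  have "countable I"
  proof -
    have "I \<subseteq> \<rat> \<times> \<rat>" by (auto simp: I_def)
    moreover have "countable (\<rat> \<times> (\<rat>::real set))" by (simp add: countable_rat)
    ultimately show ?thesis by (rule countable_subset)
  qed
  have "N \<in> null_sets \<rho>"
    unfolding N_def
  proof (rule null_sets_UN')
    show "countable I" by fact
    fix ab assume "ab \<in> I"
    then obtain a b where ab: "ab = (a,b)" "emeasure \<rho> {a<..<b} = 0" by (auto simp: I_def)
    then show "(case ab of (a, b) \<Rightarrow> {a<..<b}) \<in> null_sets \<rho>"
      using sets ab by (simp add: null_sets_def)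
  qed
  then have "AE t in \<rho>. t \<notin> N" by (rule AE_not_in)
  moreover have "t \<in> measure_support \<rho>" if "t \<notin> N" for t
  proof (rule ccontr)
    assume "t \<notin> measure_support \<rho>"
    then obtain e where e: "e > 0" "\<not> emeasure \<rho> {t - e<..<t + e} > 0"
      by (auto simp: measure_support_def)
    then have e0: "emeasure \<rho> {t - e<..<t + e} = 0" by (simp add: not_gr_zero)
    obtain a where a: "a \<in> \<rat>" "t - e < a" "a < t" using Rats_dense_in_real[of "t-e" t] e by auto
    obtain b where b: "b \<in> \<rat>" "t < b" "b < t + e" using Rats_dense_in_real[of t "t+e"] e by auto
    have "emeasure \<rho> {a<..<b} \<le> emeasure \<rho> {t - e<..<t + e}"
      by (rule emeasure_mono) (use a b sets in auto)
    then have "(a,b) \<in> I" using a b e0 by (auto simp: I_def)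
    then have "t \<in> N" unfolding N_def by (rule UN_I) (use a b in auto)
    then show False using that by simp
  qed
  ultimately show ?thesis by (metis (mono_tags, lifting) eventually_mono)
qed

lemma AE_outside_null_interval:
  assumes "sets \<rho> = sets (borel :: real measure)" "emeasure \<rho> {x0 - e<..<x0 + e} = 0"
  shows "AE t in \<rho>. e \<le> \<bar>t - x0\<bar>"
proof -
  have "{x0 - e<..<x0 + e} \<in> null_sets \<rho>" using assms by (simp add: null_sets_def)
  then have "AE t in \<rho>. t \<notin> {x0 - e<..<x0 + e}" by (rule AE_not_in)
  then show ?thesis by (rule eventually_mono) auto
qed

lemma integrable_nevanlinna_kernel:
  assumes "finite_measure \<rho>" "sets \<rho> = sets borel" "Im z > 0"
  shows "integrable \<rho> (nevanlinna_kernel z)"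
proof (rule finite_measure.integrable_const_bound[OF assms(1)])
  show "AE t in \<rho>. norm (nevanlinna_kernel z t) \<le> cmod (1 + z^2) / Im z + cmod z"
    using norm_nevanlinna_kernel_le[OF Im_le_norm_real_minus assms(3)] by simp
qed (rule measurable_if_sets_borel[OF assms(2) nevanlinna_kernel_measurable])

lemma integrable_nevanlinna_kernel_real:
  assumes fin: "finite_measure \<rho>" and sets: "sets \<rho> = sets borel" and e: "e > 0"
    and null: "emeasure \<rho> {x0 - e<..<x0 + e} = 0"
  shows "integrable \<rho> (nevanlinna_kernel (of_real x0))"
proof (rule finite_measure.integrable_const_bound[OF fin])
  show "AE t in \<rho>. norm (nevanlinna_kernel (of_real x0) t) \<le> cmod (1 + (of_real x0)^2) / e + cmod (of_real x0 :: complex)"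
    using AE_outside_null_interval[OF sets null]
  proof (rule eventually_mono)
    fix t assume "e \<le> \<bar>t - x0\<bar>"
    then have "e \<le> cmod (of_real t - of_real x0 :: complex)" by (simp flip: of_real_diff)
    then show "norm (nevanlinna_kernel (of_real x0) t) \<le> cmod (1 + (of_real x0)^2) / e + cmod (of_real x0 :: complex)"
      using norm_nevanlinna_kernel_le[OF _ e] by blast
  qed
qed (rule measurable_if_sets_borel[OF sets nevanlinna_kernel_measurable])

lemma integrable_difference_kernel:
  assumes fin: "finite_measure \<rho>" and sets: "sets \<rho> = sets borel" and e: "e > 0"
    and null: "emeasure \<rho> {x0 - e<..<x0 + e} = 0" and z: "Im z > 0"
  shows "integrable \<rho> (difference_kernel x0 z)"
proof -
  have "integrable \<rho> (\<lambda>t. (nevanlinna_kernel z t - nevanlinna_kernel (of_real x0) t) / (z - of_real x0))"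
    using integrable_nevanlinna_kernel[OF fin sets z] integrable_nevanlinna_kernel_real[OF fin sets e null]
    by auto
  moreover have "AE t in \<rho>. (nevanlinna_kernel z t - nevanlinna_kernel (of_real x0) t) / (z - of_real x0)
      = difference_kernel x0 z t"
    using AE_outside_null_interval[OF sets null]
  proof (rule eventually_mono)
    fix t assume "e \<le> \<bar>t - x0\<bar>"
    then have "t \<noteq> x0" using e by auto
    moreover have "of_real t \<noteq> z" "z - of_real x0 \<noteq> 0" using z by auto
    ultimately show "(nevanlinna_kernel z t - nevanlinna_kernel (of_real x0) t) / (z - of_real x0)
      = difference_kernel x0 z t" by (simp add: nevanlinna_kernel_diff)
  qed
  ultimately show ?thesis
    using measurable_if_sets_borel[OF sets difference_kernel_measurable] integrable_cong_AE_imp by blast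
qed

lemma norm_integral_le_AE_bound:
  fixes g :: "'a \<Rightarrow> 'b::{banach, second_countable_topology}"
  assumes "finite_measure M" "AE x in M. norm (g x) \<le> K" "integrable M g"
  shows "norm (integral\<^sup>L M g) \<le> K * measure M (space M)"
proof -
  have "norm (integral\<^sup>L M g) \<le> integral\<^sup>L M (\<lambda>x. norm (g x))" by (rule integral_norm_bound)
  also have "\<dots> \<le> integral\<^sup>L M (\<lambda>x. K)"
    by (rule integral_mono_AE) (use assms finite_measure.integrable_const[OF assms(1)] in auto)
  finally show ?thesis by (simp add: mult.commute)
qed

section \<open>The Herglotz representation on the unit disc\<close>

definition circle_param :: "real \<Rightarrow> complex" where
  "circle_param s = exp (2 * of_real pi * \<i> * of_real s)"

lemma circlepath_0_1: "circlepath 0 1 s = circle_param s"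
  by (simp add: circlepath circle_param_def)

lemma norm_circle_param [simp]: "norm (circle_param s) = 1"
  by (simp add: circle_param_def norm_exp_eq_Re)

lemma circle_param_nonzero [simp]: "circle_param s \<noteq> 0"
  by (simp add: circle_param_def)

lemma cnj_circle_param: "cnj (circle_param s) = inverse (circle_param s)"
proof -
  have "circle_param s * cnj (circle_param s) = 1"
    using complex_norm_square[of "circle_param s"] by simp
  then show ?thesis by (simp add: field_simps)
qed

lemma continuous_on_circle_param: "continuous_on S circle_param"
  unfolding circle_param_def by (intro continuous_intros)

lemma circle_param_measurable [measurable]: "circle_param \<in> borel_measurable borel"
  by (rule borel_measurable_continuous_onI[OF continuous_on_circle_param])

lemma has_integral_circle_param:
  assumes "(h has_contour_integral 2 * of_real pi * \<i> * I) (circlepath 0 1)"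
  shows "((\<lambda>s. h (circle_param s) * circle_param s) has_integral I) {0..1}"
proof -
  have "((\<lambda>s. h (circle_param s) * (2 * of_real pi * \<i> * circle_param s)) has_integral 2 * of_real pi * \<i> * I) {0..1}"
    using assms unfolding has_contour_integral_def
    by (rule has_integral_eq[rotated]) (simp add: vector_derivative_circlepath01 circlepath_0_1 circle_param_def)
  then have "((\<lambda>s. h (circle_param s) * (2 * of_real pi * \<i> * circle_param s) / (2 * of_real pi * \<i>))
      has_integral 2 * of_real pi * \<i> * I / (2 * of_real pi * \<i>)) {0..1}"
    by (rule has_integral_divide)
  moreover have "2 * of_real pi * \<i> * I / (2 * of_real pi * \<i>) = I" by (simp add: pi_neq_zero)
  ultimately have "((\<lambda>s. h (circle_param s) * (2 * of_real pi * \<i> * circle_param s) / (2 * of_real pi * \<i>))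
      has_integral I) {0..1}" by (simp only:)
  then show ?thesis by (rule has_integral_eq[rotated]) (simp add: field_simps pi_neq_zero)
qed

text \<open>The three terms on the right are the Cauchy integrands for G z, for G 0, and for the
  function u \<mapsto> G u * cnj z / (1 - cnj z * u) which is holomorphic on the closed disc.\<close>

lemma schwarz_integrand_eq:
  fixes g z u :: complex
  assumes u: "norm u = 1" and cu: "cnj u = inverse u" and z: "norm z < 1"
  shows "(u + z) / (u - z) * of_real (Re g) =
    (2 * (g * u / (u - z)) - g + cnj (g + 2 * (g * cnj z * u / (1 - cnj z * u)))) / 2"
proof -
  have u0: "u \<noteq> 0" and uz: "u - z \<noteq> 0" using u z by auto
  have "cnj (g + 2 * (g * cnj z * u / (1 - cnj z * u))) = cnj g + 2 * (cnj g * z * inverse u / (1 - z * inverse u))"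
    by (simp add: cu)
  moreover have "cnj g * z * inverse u / (1 - z * inverse u) = cnj g * z / (u - z)"
    using u0 uz by (simp add: field_simps)
  moreover have "of_real (Re g) = (g + cnj g) / 2" by (simp add: complex_add_cnj)
  ultimately show ?thesis using u0 uz by (simp add: field_simps)
qed

lemma schwarz_formula:
  assumes G: "G holomorphic_on cball 0 1" and z: "norm z < 1"
  shows "((\<lambda>s. (circle_param s + z) / (circle_param s - z) * of_real (Re (G (circle_param s))))
    has_integral G z - \<i> * of_real (Im (G 0))) {0..1}"
proof -
  let ?e = circle_param
  have "((\<lambda>s. G (?e s) / (?e s - z) * ?e s) has_integral G z) {0..1}"
    by (rule has_integral_circle_param) (rule Cauchy_integral_circlepath_simple[OF G], use z in simp)
  then have A: "((\<lambda>s. G (?e s) * ?e s / (?e s - z)) has_integral G z) {0..1}"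
    by (rule has_integral_eq[rotated]) auto
  have "((\<lambda>s. G (?e s) / (?e s - 0) * ?e s) has_integral G 0) {0..1}"
    by (rule has_integral_circle_param) (rule Cauchy_integral_circlepath_simple[OF G], simp)
  then have B: "((\<lambda>s. G (?e s)) has_integral G 0) {0..1}"
    by (rule has_integral_eq[rotated]) auto
  have "(\<lambda>u. G u * cnj z / (1 - cnj z * u)) holomorphic_on cball 0 1"
  proof (intro holomorphic_intros G)
    fix u :: complex assume "u \<in> cball 0 1"
    then have "norm (cnj z * u) \<le> norm z" by (simp add: norm_mult mult_left_le)
    then show "1 - cnj z * u \<noteq> 0" using z by auto
  qed
  then have "((\<lambda>u. G u * cnj z / (1 - cnj z * u)) has_contour_integral 2 * of_real pi * \<i> * 0) (circlepath 0 1)"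
    unfolding mult_zero_right by (rule Cauchy_theorem_convex_simple) (auto simp: path_image_circlepath)
  then have C: "((\<lambda>s. G (?e s) * cnj z * ?e s / (1 - cnj z * ?e s)) has_integral 0) {0..1}"
    by (rule has_integral_eq[rotated, OF has_integral_circle_param]) auto
  have "((\<lambda>s. G (?e s) + 2 * (G (?e s) * cnj z * ?e s / (1 - cnj z * ?e s))) has_integral G 0 + 2 * 0) {0..1}"
    by (intro has_integral_add B has_integral_mult_right C)
  then have BC: "((\<lambda>s. cnj (G (?e s) + 2 * (G (?e s) * cnj z * ?e s / (1 - cnj z * ?e s))))
      has_integral cnj (G 0)) {0..1}"
    using has_integral_cnj by (fastforce simp: o_def)
  have total: "(2 * G z - G 0 + cnj (G 0)) / 2 = G z - \<i> * of_real (Im (G 0))"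
    by (simp add: complex_eq_iff)
  have "((\<lambda>s. (2 * (G (?e s) * ?e s / (?e s - z)) - G (?e s)
      + cnj (G (?e s) + 2 * (G (?e s) * cnj z * ?e s / (1 - cnj z * ?e s)))) / 2)
      has_integral (2 * G z - G 0 + cnj (G 0)) / 2) {0..1}"
    by (intro has_integral_divide has_integral_add has_integral_diff has_integral_mult_right A B BC)
  then show ?thesis
    unfolding total by (rule has_integral_eq[rotated])
      (rule schwarz_integrand_eq[symmetric, OF norm_circle_param cnj_circle_param z])
qed

definition herglotz_kernel :: "complex \<Rightarrow> real \<Rightarrow> complex" where
  "herglotz_kernel w s = (circle_param s + w) / (circle_param s - w)"

definition boundary_re :: "(complex \<Rightarrow> complex) \<Rightarrow> real \<Rightarrow> real" where
  "boundary_re G s = indicator {0..1} s * Re (G (circle_param s))"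

lemma continuous_on_circle_param_comp:
  assumes "G holomorphic_on cball 0 1"
  shows "continuous_on UNIV (\<lambda>s. G (circle_param s))"
  by (rule continuous_on_compose2[OF holomorphic_on_imp_continuous_on[OF assms] continuous_on_circle_param])
    auto

lemma boundary_re_measurable [measurable]:
  assumes "G holomorphic_on cball 0 1"
  shows "boundary_re G \<in> borel_measurable borel"
proof -
  have "(\<lambda>s. Re (G (circle_param s))) \<in> borel_measurable borel"
    by (rule borel_measurable_continuous_onI)
      (intro continuous_intros continuous_on_circle_param_comp[OF assms])
  then show ?thesis unfolding boundary_re_def[abs_def] by measurable
qed

lemma boundary_re_nonneg:
  assumes "\<And>w. w \<in> cball 0 1 \<Longrightarrow> Re (G w) \<ge> 0"
  shows "boundary_re G s \<ge> 0"
  using assms[of "circle_param s"] by (simp add: boundary_re_def)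

lemma continuous_on_herglotz_kernel:
  assumes "norm w < 1"
  shows "continuous_on UNIV (herglotz_kernel w)"
proof -
  have "circle_param s \<noteq> w" for s
    using assms norm_circle_param[of s] by auto
  then show ?thesis unfolding herglotz_kernel_def[abs_def]
    by (intro continuous_intros continuous_on_circle_param) auto
qed

lemma herglotz_kernel_measurable [measurable]:
  "norm w < 1 \<Longrightarrow> herglotz_kernel w \<in> borel_measurable borel"
  by (rule borel_measurable_continuous_onI[OF continuous_on_herglotz_kernel])

lemma norm_herglotz_kernel_le:
  assumes "norm w < 1"
  shows "norm (herglotz_kernel w s) \<le> 2 / (1 - norm w)"
proof -
  have "norm (circle_param s + w) \<le> 2" using norm_triangle_ineq[of "circle_param s" w] assms by simp
  moreover have "norm (circle_param s - w) \<ge> 1 - norm w" using norm_triangle_ineq2[of "circle_param s" w] by simp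
  ultimately show ?thesis unfolding herglotz_kernel_def norm_divide
    using assms by (intro frac_le) auto
qed

lemma schwarz_formula_lborel:
  assumes G: "G holomorphic_on cball 0 1" and w: "norm w < 1"
  shows "integral\<^sup>L lborel (\<lambda>s. boundary_re G s *\<^sub>R herglotz_kernel w s) = G w - \<i> * of_real (Im (G 0))"
proof -
  let ?h = "\<lambda>s. herglotz_kernel w s * of_real (Re (G (circle_param s)))"
  have "continuous_on UNIV ?h"
    by (intro continuous_intros continuous_on_herglotz_kernel[OF w] continuous_on_circle_param_comp[OF G])
  then have "set_integrable lborel {0..1} ?h"
    unfolding set_integrable_def by (intro borel_integrable_compact) (auto intro: continuous_on_subset)
  then have "(LINT s:{0..1}|lborel. ?h s) = integral {0..1} ?h"
    by (rule set_borel_integral_eq_integral)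
  also have "\<dots> = G w - \<i> * of_real (Im (G 0))"
    using schwarz_formula[OF G w] unfolding herglotz_kernel_def by (rule integral_unique)
  finally show ?thesis
    by (simp add: set_lebesgue_integral_def boundary_re_def scaleR_conv_of_real mult_ac)
qed

lemma integrable_boundary_re:
  assumes "G holomorphic_on cball 0 1"
  shows "integrable lborel (boundary_re G)"
proof -
  have "continuous_on {0..1} (\<lambda>s. Re (G (circle_param s)))"
    by (intro continuous_intros continuous_on_subset[OF continuous_on_circle_param_comp[OF assms]]) simp
  then have "integrable lborel (\<lambda>s. indicator {0..1} s *\<^sub>R Re (G (circle_param s)))"
    by (intro borel_integrable_compact) auto
  then show ?thesis by (simp add: boundary_re_def[abs_def])
qed

lemma integral_boundary_re:
  assumes "G holomorphic_on cball 0 1"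
  shows "integral\<^sup>L lborel (boundary_re G) = Re (G 0)"
proof -
  have "(\<lambda>s. boundary_re G s *\<^sub>R herglotz_kernel 0 s) = (\<lambda>s. complex_of_real (boundary_re G s))"
    by (simp add: herglotz_kernel_def fun_eq_iff scaleR_conv_of_real)
  then have "of_real (integral\<^sup>L lborel (boundary_re G)) = G 0 - \<i> * of_real (Im (G 0))"
    using schwarz_formula_lborel[OF assms, of 0] by (simp add: integral_complex_of_real)
  then show ?thesis by (simp add: complex_eq_iff)
qed

lemma boundary_re_distribution:
  assumes G: "G holomorphic_on cball 0 1" and Gre: "\<And>w. w \<in> cball 0 1 \<Longrightarrow> Re (G w) \<ge> 0"
    and G0: "Re (G 0) = 1"
  shows "real_distribution (density lborel (\<lambda>s. ennreal (boundary_re G s)))" (is "real_distribution ?\<mu>")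
    and "measure (density lborel (\<lambda>s. ennreal (boundary_re G s))) {-1<..2} = 1"
proof -
  have total: "emeasure ?\<mu> A = 1" if "A \<in> sets borel" "{0..1} \<subseteq> A" for A
  proof -
    have "emeasure ?\<mu> A = (\<integral>\<^sup>+ s. ennreal (boundary_re G s) * indicator A s \<partial>lborel)"
      by (rule emeasure_density) (use that boundary_re_measurable[OF G] in auto)
    also have "\<dots> = (\<integral>\<^sup>+ s. ennreal (boundary_re G s) \<partial>lborel)"
      by (rule nn_integral_cong) (use that in \<open>auto simp: boundary_re_def indicator_def\<close>)
    also have "\<dots> = ennreal (integral\<^sup>L lborel (boundary_re G))"
      by (rule nn_integral_eq_integral[OF integrable_boundary_re[OF G]])
        (rule AE_I2, rule boundary_re_nonneg[OF Gre])
    finally show ?thesis by (simp add: integral_boundary_re[OF G] G0)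
  qed
  have "prob_space ?\<mu>" by (rule prob_spaceI) (simp add: total)
  moreover have "emeasure ?\<mu> {-1<..2} = 1" by (rule total) auto
  ultimately show "real_distribution ?\<mu>" and "measure ?\<mu> {-1<..2} = 1"
    by (auto simp: real_distribution_def real_distribution_axioms_def measure_def)
qed

lemma integral_boundary_re_herglotz_kernel:
  assumes G: "G holomorphic_on cball 0 1" and Gre: "\<And>w. w \<in> cball 0 1 \<Longrightarrow> Re (G w) \<ge> 0"
    and w: "norm w < 1"
  shows "integral\<^sup>L (density lborel (\<lambda>s. ennreal (boundary_re G s))) (herglotz_kernel w)
    = G w - \<i> * of_real (Im (G 0))"
proof -
  have "integral\<^sup>L (density lborel (\<lambda>s. ennreal (boundary_re G s))) (herglotz_kernel w)
      = integral\<^sup>L lborel (\<lambda>s. boundary_re G s *\<^sub>R herglotz_kernel w s)"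
    by (rule integral_density) (use boundary_re_measurable[OF G] w boundary_re_nonneg[OF Gre] in auto)
  also have "\<dots> = G w - \<i> * of_real (Im (G 0))" by (rule schwarz_formula_lborel[OF G w])
  finally show ?thesis .
qed

definition inner_radius :: "nat \<Rightarrow> real" where
  "inner_radius n = 1 - inverse (real (Suc n)) / 2"

lemma inner_radius_pos: "inner_radius n > 0" and inner_radius_less_1: "inner_radius n < 1"
proof -
  have "inverse (real (Suc n)) \<le> 1" by (subst inverse_le_1_iff) simp
  moreover have "inverse (real (Suc n)) > 0" by simp
  ultimately show "inner_radius n > 0" "inner_radius n < 1" unfolding inner_radius_def by linarith+
qed

lemma inner_radius_tendsto_1: "inner_radius \<longlonglongrightarrow> 1"
proof -
  have "(\<lambda>n. 1 - inverse (real (Suc n)) / 2) \<longlonglongrightarrow> 1 - 0 / 2"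
    by (intro tendsto_intros LIMSEQ_inverse_real_of_nat) simp
  then show ?thesis by (simp add: inner_radius_def[abs_def])
qed

lemma inner_radius_scaled_in_ball:
  fixes w :: complex
  assumes "w \<in> cball 0 1"
  shows "of_real (inner_radius n) * w \<in> ball 0 1"
proof -
  have "norm (of_real (inner_radius n) * w) \<le> inner_radius n"
    using assms inner_radius_pos[of n] by (simp add: norm_mult mult_left_le)
  then show ?thesis using inner_radius_less_1[of n] by simp
qed

lemma holomorphic_on_inner_radius_scaled:
  assumes "F holomorphic_on ball 0 1"
  shows "(\<lambda>w. F (of_real (inner_radius n) * w)) holomorphic_on cball 0 1"
proof -
  have "(F \<circ> (\<lambda>w. of_real (inner_radius n) * w)) holomorphic_on cball 0 1"
    by (rule holomorphic_on_compose_gen[OF _ assms])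
      (auto intro!: holomorphic_intros inner_radius_scaled_in_ball)
  then show ?thesis by (simp add: o_def)
qed

lemma tendsto_inner_radius_scaled:
  fixes w :: complex
  assumes F: "F holomorphic_on ball 0 1" and w: "norm w < 1" and r: "filterlim r sequentially sequentially"
  shows "(\<lambda>k. F (of_real (inner_radius (r k)) * w)) \<longlonglongrightarrow> F w"
proof -
  have "isCont F w"
    using holomorphic_on_imp_continuous_on[OF F] w by (simp add: continuous_on_eq_continuous_at)
  moreover have "(\<lambda>k. of_real (inner_radius (r k)) * w) \<longlonglongrightarrow> of_real 1 * w"
    using filterlim_compose[OF inner_radius_tendsto_1 r] by (intro tendsto_intros) (simp add: o_def)
  ultimately show ?thesis using isCont_tendsto_compose by fastforce
qed

lemma tight_if_mass_on_interval:
  assumes "\<And>n. real_distribution (\<mu> n)" "\<And>n. measure (\<mu> n) {a<..b} = 1" "a < b"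
  shows "tight \<mu>"
  unfolding tight_def
proof (intro conjI allI impI)
  fix \<epsilon> :: real assume "\<epsilon> > 0"
  then show "\<exists>a b. a < b \<and> (\<forall>n. 1 - \<epsilon> < measure (\<mu> n) {a<..b})"
    using assms(2,3) by (intro exI[of _ a] exI[of _ b]) simp
qed (rule assms(1))

lemma integral_weak_limit_eq:
  fixes K :: "real \<Rightarrow> 'a::{banach, second_countable_topology}"
  assumes "\<And>n. real_distribution (\<mu> n)" "real_distribution M" "weak_conv_m \<mu> M"
    and "continuous_on UNIV K" "\<And>x. norm (K x) \<le> B"
    and "(\<lambda>n. integral\<^sup>L (\<mu> n) K) \<longlonglongrightarrow> L"
  shows "integral\<^sup>L M K = L"
proof (rule LIMSEQ_unique[OF _ assms(6)])
  show "(\<lambda>n. integral\<^sup>L (\<mu> n) K) \<longlonglongrightarrow> integral\<^sup>L M K"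
    using assms(4) by (intro weak_conv_imp_integral_bdd_continuous_conv[OF assms(1-3) _ assms(5)])
      (simp add: continuous_on_eq_continuous_at)
qed

text \<open>The boundary measures of the dilations w \<mapsto> F (inner_radius n * w) are tight, and a weak
  limit point of them represents F.\<close>

lemma herglotz_disk:
  assumes F: "F holomorphic_on ball 0 1" and Fre: "\<And>w. w \<in> ball 0 1 \<Longrightarrow> Re (F w) \<ge> 0"
    and F0: "Re (F 0) > 0"
  shows "\<exists>M. real_distribution M \<and> (\<forall>w. norm w < 1 \<longrightarrow>
      F w = \<i> * of_real (Im (F 0)) + of_real (Re (F 0)) * integral\<^sup>L M (herglotz_kernel w))"
proof -
  define m where "m = Re (F 0)"
  define G where "G n w = F (of_real (inner_radius n) * w) / of_real m" for n w
  define \<mu> where "\<mu> n = density lborel (\<lambda>s. ennreal (boundary_re (G n) s))" for n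
  have G: "G n holomorphic_on cball 0 1" for n
    unfolding G_def[abs_def] using F0
    by (intro holomorphic_intros holomorphic_on_inner_radius_scaled[OF F]) (simp add: m_def)
  have Gre: "Re (G n w) \<ge> 0" if "w \<in> cball 0 1" for n w
    using Fre[OF inner_radius_scaled_in_ball[OF that]] F0 by (simp add: G_def m_def)
  have G0: "G n 0 = F 0 / of_real m" for n by (simp add: G_def)
  then have "Re (G n 0) = 1" for n using F0 by (simp add: m_def)
  then have \<mu>_distr: "real_distribution (\<mu> n)" "measure (\<mu> n) {-1<..2} = 1" for n
    unfolding \<mu>_def using boundary_re_distribution[OF G Gre] by blast+
  have "tight \<mu>" by (rule tight_if_mass_on_interval[OF \<mu>_distr]) simp
  then obtain r M where r: "strict_mono r" and M: "real_distribution M"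
    and weak: "weak_conv_m (\<mu> \<circ> id \<circ> r) M"
    using tight_imp_convergent_subsubsequence[OF _ strict_mono_id] by blast
  have "F w = \<i> * of_real (Im (F 0)) + of_real m * integral\<^sup>L M (herglotz_kernel w)" if w: "norm w < 1" for w
  proof -
    have "integral\<^sup>L (\<mu> n) (herglotz_kernel w) = G n w - \<i> * of_real (Im (G n 0))" for n
      unfolding \<mu>_def by (rule integral_boundary_re_herglotz_kernel[OF G Gre w])
    moreover have "(\<lambda>k. G (r k) w - \<i> * of_real (Im (G (r k) 0)))
        \<longlonglongrightarrow> F w / of_real m - \<i> * of_real (Im (F 0 / of_real m))"
      unfolding G0 unfolding G_def using F0 tendsto_inner_radius_scaled[OF F w filterlim_subseq[OF r]]
      by (intro tendsto_intros) (auto simp: m_def)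
    ultimately have "(\<lambda>k. integral\<^sup>L ((\<mu> \<circ> id \<circ> r) k) (herglotz_kernel w))
        \<longlonglongrightarrow> F w / of_real m - \<i> * of_real (Im (F 0 / of_real m))"
      by simp
    then have "integral\<^sup>L M (herglotz_kernel w) = F w / of_real m - \<i> * of_real (Im (F 0 / of_real m))"
      using \<mu>_distr(1) by (intro integral_weak_limit_eq[OF _ M weak continuous_on_herglotz_kernel[OF w]
          norm_herglotz_kernel_le[OF w]]) auto
    moreover have "m \<noteq> 0" using F0 by (simp add: m_def)
    ultimately have "of_real m * integral\<^sup>L M (herglotz_kernel w) = F w - \<i> * of_real (Im (F 0))"
      by (simp add: field_simps)
    then show ?thesis by simp
  qed
  then show ?thesis using M unfolding m_def by blast
qed

text \<open>If Re F vanishes at the centre, every boundary density is null, so all dilations of F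
  are the constant \<i> * Im (F 0).\<close>

lemma herglotz_disk_degenerate:
  assumes F: "F holomorphic_on ball 0 1" and Fre: "\<And>w. w \<in> ball 0 1 \<Longrightarrow> Re (F w) \<ge> 0"
    and F0: "Re (F 0) = 0" and w: "norm w < 1"
  shows "F w = \<i> * of_real (Im (F 0))"
proof -
  define G where "G n v = F (of_real (inner_radius n) * v)" for n v
  have G: "G n holomorphic_on cball 0 1" for n
    unfolding G_def[abs_def] by (rule holomorphic_on_inner_radius_scaled[OF F])
  have Gre: "Re (G n v) \<ge> 0" if "v \<in> cball 0 1" for n v
    using Fre[OF inner_radius_scaled_in_ball[OF that]] by (simp add: G_def)
  have "F (of_real (inner_radius n) * w) = \<i> * of_real (Im (F 0))" for n
  proof -
    have "integral\<^sup>L lborel (boundary_re (G n)) = 0" using integral_boundary_re[OF G] F0 by (simp add: G_def)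
    then have AE0: "AE s in lborel. boundary_re (G n) s = 0"
      using integral_nonneg_eq_0_iff_AE[OF integrable_boundary_re[OF G]] boundary_re_nonneg[OF Gre] by simp
    have "integral\<^sup>L lborel (\<lambda>s. boundary_re (G n) s *\<^sub>R herglotz_kernel w s) = 0"
      by (rule integral_eq_zero_AE) (use AE0 in \<open>rule eventually_mono, simp\<close>)
    then show ?thesis using schwarz_formula_lborel[OF G w] by (simp add: G_def)
  qed
  then have "(\<lambda>k. \<i> * of_real (Im (F 0))) \<longlonglongrightarrow> F w"
    using tendsto_inner_radius_scaled[OF F w filterlim_ident] by simp
  then show ?thesis by (simp add: LIMSEQ_const_iff)
qed

section \<open>The Nevanlinna representation on the upper half-plane\<close>

definition disk_to_upper :: "complex \<Rightarrow> complex" where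
  "disk_to_upper w = \<i> * (1 + w) / (1 - w)"

definition upper_to_disk :: "complex \<Rightarrow> complex" where
  "upper_to_disk z = (z - \<i>) / (z + \<i>)"

lemma Im_disk_to_upper: "Im (disk_to_upper w) = (1 - (Re w)^2 - (Im w)^2) / ((1 - Re w)^2 + (Im w)^2)"
  by (simp add: disk_to_upper_def Re_divide Im_divide power2_eq_square algebra_simps)

lemma Im_disk_to_upper_pos:
  assumes "norm w < 1"
  shows "Im (disk_to_upper w) > 0"
proof -
  have "Re w < 1" using assms abs_Re_le_cmod[of w] by linarith
  then have "(1 - Re w)^2 + (Im w)^2 > 0" by (simp add: add_pos_nonneg)
  moreover have "(cmod w)^2 < 1" using assms by (simp add: power_less_one_iff)
  then have "(Re w)^2 + (Im w)^2 < 1" by (simp add: cmod_power2)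
  ultimately show ?thesis unfolding Im_disk_to_upper by (intro divide_pos_pos) auto
qed

lemma Im_disk_to_upper_circle:
  assumes "norm u = 1"
  shows "Im (disk_to_upper u) = 0"
proof -
  have "(Re u)^2 + (Im u)^2 = 1" using assms cmod_power2[of u] by simp
  then show ?thesis unfolding Im_disk_to_upper by simp
qed

lemma norm_upper_to_disk:
  assumes "Im z > 0"
  shows "norm (upper_to_disk z) < 1"
proof -
  have "(cmod (z - \<i>))^2 = (Re z)^2 + (Im z - 1)^2" "(cmod (z + \<i>))^2 = (Re z)^2 + (Im z + 1)^2"
    by (simp_all add: cmod_power2)
  moreover have "(Re z)^2 + (Im z - 1)^2 < (Re z)^2 + (Im z + 1)^2"
    using assms by (simp add: power2_eq_square algebra_simps)
  ultimately have "(cmod (z - \<i>))^2 < (cmod (z + \<i>))^2" by simp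
  then have "cmod (z - \<i>) < cmod (z + \<i>)" by (simp add: power_less_imp_less_base)
  moreover have "z + \<i> \<noteq> 0" using assms by (auto simp: complex_eq_iff)
  ultimately show ?thesis by (simp add: upper_to_disk_def norm_divide divide_less_eq)
qed

lemma disk_to_upper_upper_to_disk:
  assumes "Im z > 0"
  shows "disk_to_upper (upper_to_disk z) = z"
proof -
  have nz: "z + \<i> \<noteq> 0" using assms by (auto simp: complex_eq_iff)
  have plus: "1 + upper_to_disk z = 2 * z / (z + \<i>)" and minus: "1 - upper_to_disk z = 2 * \<i> / (z + \<i>)"
    using nz by (simp_all add: upper_to_disk_def field_simps)
  have "\<i> * (z * 2) - 2 = 2 * \<i> * (z + \<i>)" by (simp add: algebra_simps)
  then have "\<i> * (z * 2) - 2 \<noteq> 0" using nz by simp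
  moreover have "\<i> * (z * (z * 2)) - z * 2 = z * (\<i> * (z * 2) - 2)" by (simp add: algebra_simps)
  ultimately show ?thesis unfolding disk_to_upper_def plus minus using nz by (simp add: field_simps)
qed

lemma upper_to_disk_disk_to_upper:
  assumes "u \<noteq> 1"
  shows "upper_to_disk (disk_to_upper u) = u"
proof -
  have "1 - u \<noteq> 0" "\<i> * (1 + u) + \<i> * (1 - u) \<noteq> 0" using assms by (simp_all add: algebra_simps)
  then show ?thesis by (simp add: disk_to_upper_def upper_to_disk_def field_simps)
qed

lemma holomorphic_on_disk_to_upper: "disk_to_upper holomorphic_on ball 0 1"
  unfolding disk_to_upper_def[abs_def] by (intro holomorphic_intros) auto

lemma herglotz_kernel_eq_nevanlinna_kernel:
  assumes z: "Im z > 0"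
  shows "\<i> * (upper_to_disk (of_real t) + upper_to_disk z) / (upper_to_disk (of_real t) - upper_to_disk z)
    = nevanlinna_kernel z t"
proof -
  have nz: "z + \<i> \<noteq> 0" "of_real t + \<i> \<noteq> 0" using z by (auto simp: complex_eq_iff)
  have tz: "of_real t - z \<noteq> 0" using z by auto
  have d: "(of_real t - \<i>) * (z + \<i>) - (z - \<i>) * (of_real t + \<i>) = 2 * \<i> * (of_real t - z)"
    by (simp add: algebra_simps)
  have "upper_to_disk (of_real t) + upper_to_disk z =
      ((of_real t - \<i>) * (z + \<i>) + (z - \<i>) * (of_real t + \<i>)) / ((of_real t + \<i>) * (z + \<i>))"
    "upper_to_disk (of_real t) - upper_to_disk z =
      ((of_real t - \<i>) * (z + \<i>) - (z - \<i>) * (of_real t + \<i>)) / ((of_real t + \<i>) * (z + \<i>))"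
    using nz by (simp_all add: upper_to_disk_def field_simps)
  moreover have "(of_real t - \<i>) * (z + \<i>) + (z - \<i>) * (of_real t + \<i>) = 2 * (1 + z * of_real t)"
    by (simp add: algebra_simps)
  ultimately have "\<i> * (upper_to_disk (of_real t) + upper_to_disk z) / (upper_to_disk (of_real t) - upper_to_disk z)
      = \<i> * (2 * (1 + z * of_real t)) / (2 * \<i> * (of_real t - z))"
    using nz tz d by (simp add: divide_divide_eq_left)
  also have "\<dots> = nevanlinna_kernel z t" using tz by (simp add: nevanlinna_kernel_def field_simps)
  finally show ?thesis .
qed

text \<open>Under the Cayley transform the boundary parameter s corresponds to the real point
  circle_to_real s, except on the set where circle_param s = 1, which corresponds to \<infinity>.\<close>

definition circle_to_real :: "real \<Rightarrow> real" where
  "circle_to_real s = Re (disk_to_upper (circle_param s))"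

definition circle_pole :: "real set" where
  "circle_pole = {s. circle_param s = 1}"

lemma circle_to_real_measurable [measurable]: "circle_to_real \<in> borel_measurable borel"
  unfolding circle_to_real_def[abs_def] disk_to_upper_def by measurable

lemma circle_pole_measurable [measurable]: "circle_pole \<in> sets borel"
proof -
  have "closed {s. circle_param s = 1}"
    by (rule closed_Collect_eq[OF continuous_on_circle_param continuous_on_const])
  then show ?thesis unfolding circle_pole_def by simp
qed

lemma herglotz_kernel_upper_to_disk:
  assumes z: "Im z > 0"
  shows "\<i> * herglotz_kernel (upper_to_disk z) s =
    indicator circle_pole s *\<^sub>R z + indicator (- circle_pole) s *\<^sub>R nevanlinna_kernel z (circle_to_real s)"
proof (cases "circle_param s = 1")
  case True
  then show ?thesis
    using disk_to_upper_upper_to_disk[OF z]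
    by (simp add: herglotz_kernel_def disk_to_upper_def circle_pole_def)
next
  case False
  have "disk_to_upper (circle_param s) = of_real (circle_to_real s)"
    using Im_disk_to_upper_circle[OF norm_circle_param] by (simp add: circle_to_real_def complex_eq_iff)
  then have "circle_param s = upper_to_disk (of_real (circle_to_real s))"
    using upper_to_disk_disk_to_upper[OF False] by simp
  then show ?thesis
    using False herglotz_kernel_eq_nevanlinna_kernel[OF z] by (simp add: herglotz_kernel_def circle_pole_def)
qed

lemma nevanlinna_rep_const:
  assumes "\<And>z. Im z > 0 \<Longrightarrow> f z = of_real c"
  shows "nevanlinna_rep f 0 c (null_measure borel)"
  using assms by (simp add: nevanlinna_rep_def upper_half_def finite_measureI)

lemma finite_measure_density_bounded:
  assumes "finite_measure M" "g \<in> borel_measurable M" "\<And>x. g x \<le> ennreal C"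
  shows "finite_measure (density M g)"
proof (rule finite_measureI)
  have "emeasure (density M g) (space (density M g)) = (\<integral>\<^sup>+ x. g x * indicator (space M) x \<partial>M)"
    using assms(2) by (simp add: emeasure_density)
  also have "\<dots> \<le> (\<integral>\<^sup>+ x. ennreal C \<partial>M)"
    by (intro nn_integral_mono) (simp add: assms(3) indicator_def)
  also have "\<dots> < \<infinity>"
    using finite_measure.emeasure_finite[OF assms(1)] by (simp add: ennreal_mult_less_top less_top)
  finally show "emeasure (density M g) (space (density M g)) \<noteq> \<infinity>" by simp
qed

lemma nevanlinna_rep_of_disk_measure:
  assumes M: "real_distribution M" and m: "m \<ge> 0"
    and f: "\<And>z. Im z > 0 \<Longrightarrow> f z = of_real \<beta> + of_real m * (\<i> * integral\<^sup>L M (herglotz_kernel (upper_to_disk z)))"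
  defines "\<rho> \<equiv> distr (density M (\<lambda>s. ennreal (m * indicator (- circle_pole) s))) borel circle_to_real"
  shows "nevanlinna_rep f (m * measure M circle_pole) \<beta> \<rho>"
proof -
  interpret M: real_distribution M by (rule M)
  have sets_M: "sets M = sets borel" by simp
  define D where "D = density M (\<lambda>s. ennreal (m * indicator (- circle_pole) s))"
  have sets_D: "sets D = sets borel" by (simp add: D_def)
  have circle_to_real_D: "circle_to_real \<in> measurable D borel"
    by (rule measurable_if_sets_borel[OF sets_D circle_to_real_measurable])
  have "finite_measure D"
    unfolding D_def using m
    by (intro finite_measure_density_bounded[where C=m] M.finite_measure_axioms)
      (auto simp: indicator_def intro!: measurable_if_sets_borel[OF sets_M])
  then have fin: "finite_measure \<rho>"
    unfolding \<rho>_def D_def[symmetric] by (rule finite_measure.finite_measure_distr[OF _ circle_to_real_D])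
  have "f z = of_real (m * measure M circle_pole) * z + of_real \<beta> + (LINT t|\<rho>. nevanlinna_kernel z t)"
    if z: "Im z > 0" for z
  proof -
    define w where "w = upper_to_disk z"
    have w: "norm w < 1" using norm_upper_to_disk[OF z] by (simp add: w_def)
    have int_K: "integrable M (herglotz_kernel w)"
      using norm_herglotz_kernel_le[OF w] measurable_if_sets_borel[OF sets_M herglotz_kernel_measurable[OF w]]
      by (intro M.integrable_const_bound[where B="2 / (1 - norm w)"]) auto
    have pole: "has_bochner_integral M (\<lambda>s. indicator circle_pole s *\<^sub>R z) (measure M circle_pole *\<^sub>R z)"
      by (rule has_bochner_integral_indicator) (simp_all add: M.emeasure_finite less_top[symmetric])
    have "(LINT t|\<rho>. nevanlinna_kernel z t) = integral\<^sup>L D (\<lambda>s. nevanlinna_kernel z (circle_to_real s))"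
      unfolding \<rho>_def D_def[symmetric] by (rule integral_distr[OF circle_to_real_D nevanlinna_kernel_measurable])
    also have "\<dots> = integral\<^sup>L M (\<lambda>s. (m * indicator (- circle_pole) s) *\<^sub>R nevanlinna_kernel z (circle_to_real s))"
      unfolding D_def using m by (intro integral_density) (auto intro!: measurable_if_sets_borel[OF sets_M])
    also have "\<dots> = m *\<^sub>R integral\<^sup>L M (\<lambda>s. indicator (- circle_pole) s *\<^sub>R nevanlinna_kernel z (circle_to_real s))"
      by (simp add: scaleR_scaleR flip: integral_scaleR_right)
    also have "integral\<^sup>L M (\<lambda>s. indicator (- circle_pole) s *\<^sub>R nevanlinna_kernel z (circle_to_real s)) =
        integral\<^sup>L M (\<lambda>s. \<i> * herglotz_kernel w s - indicator circle_pole s *\<^sub>R z)"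
      using herglotz_kernel_upper_to_disk[OF z] by (simp add: w_def)
    also have "\<dots> = \<i> * integral\<^sup>L M (herglotz_kernel w) - measure M circle_pole *\<^sub>R z"
      using int_K pole by (simp add: has_bochner_integral_iff)
    finally show ?thesis
      using f[OF z] by (simp add: w_def scaleR_conv_of_real algebra_simps)
  qed
  then show ?thesis using m fin by (simp add: nevanlinna_rep_def upper_half_def \<rho>_def nevanlinna_kernel_def[abs_def])
qed

theorem nevanlinna_rep_exists:
  assumes "nevanlinna_class f"
  shows "\<exists>\<alpha> \<beta> \<rho>. nevanlinna_rep f \<alpha> \<beta> \<rho>"
proof -
  have f: "f holomorphic_on upper_half" and f_Im: "\<And>z. z \<in> upper_half \<Longrightarrow> Im (f z) \<ge> 0"
    using assms by (auto simp: nevanlinna_class_def)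
  define F where "F w = - \<i> * f (disk_to_upper w)" for w
  have to_upper: "disk_to_upper w \<in> upper_half" if "w \<in> ball 0 1" for w
    using Im_disk_to_upper_pos[of w] that by (simp add: upper_half_def)
  have "(\<lambda>w. - \<i> * (f \<circ> disk_to_upper) w) holomorphic_on ball 0 1"
    by (intro holomorphic_intros holomorphic_on_compose_gen[OF holomorphic_on_disk_to_upper f])
      (use to_upper in blast)
  then have F: "F holomorphic_on ball 0 1" by (simp add: F_def[abs_def])
  have F_Re: "Re (F w) \<ge> 0" if "w \<in> ball 0 1" for w
    using f_Im[OF to_upper[OF that]] by (simp add: F_def)
  have fF: "f z = \<i> * F (upper_to_disk z)" if "Im z > 0" for z
    by (simp add: F_def disk_to_upper_upper_to_disk[OF that])
  have to_disk: "upper_to_disk z \<in> ball 0 1" if "Im z > 0" for z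
    using norm_upper_to_disk[OF that] by simp
  show ?thesis
  proof (cases "Re (F 0) = 0")
    case True
    have "f z = of_real (- Im (F 0))" if "Im z > 0" for z
      using fF[OF that] herglotz_disk_degenerate[OF F F_Re True norm_upper_to_disk[OF that]] by simp
    then show ?thesis using nevanlinna_rep_const by blast
  next
    case False
    then have "Re (F 0) > 0" using F_Re[of 0] by simp
    then obtain M where M: "real_distribution M"
      and FM: "\<And>w. norm w < 1 \<Longrightarrow> F w = \<i> * of_real (Im (F 0)) + of_real (Re (F 0)) * integral\<^sup>L M (herglotz_kernel w)"
      using herglotz_disk[OF F F_Re] by blast
    have "f z = of_real (- Im (F 0)) + of_real (Re (F 0)) * (\<i> * integral\<^sup>L M (herglotz_kernel (upper_to_disk z)))"
      if "Im z > 0" for z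
      using fF[OF that] FM[OF norm_upper_to_disk[OF that]] by (simp add: algebra_simps)
    from nevanlinna_rep_of_disk_measure[OF M _ this] show ?thesis
      using \<open>Re (F 0) > 0\<close> by auto
  qed
qed

lemma sigma_set_rep:
  assumes "nevanlinna_class f"
  obtains \<alpha> \<beta> \<rho> where "nevanlinna_rep f \<alpha> \<beta> \<rho>"
    "sigma_set f = Some ` measure_support \<rho> \<union>
       (if \<alpha> > 0 \<or> \<not> bounded (measure_support \<rho>) then {None} else {})"
proof -
  define T where "T = (SOME (\<alpha>, \<beta>, \<rho>). nevanlinna_rep f \<alpha> \<beta> \<rho>)"
  obtain \<alpha> \<beta> \<rho> where T: "T = (\<alpha>, \<beta>, \<rho>)" by (cases T) auto
  have "\<exists>x. (\<lambda>(\<alpha>, \<beta>, \<rho>). nevanlinna_rep f \<alpha> \<beta> \<rho>) x" using nevanlinna_rep_exists[OF assms] by auto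
  then have "(\<lambda>(\<alpha>, \<beta>, \<rho>). nevanlinna_rep f \<alpha> \<beta> \<rho>) T" unfolding T_def by (rule someI_ex)
  then show ?thesis using that unfolding sigma_set_def T_def[symmetric] T by simp
qed

section \<open>Boundary values at a gap of the measure\<close>

definition rep_value :: "real \<Rightarrow> real \<Rightarrow> real measure \<Rightarrow> real \<Rightarrow> complex" where
  "rep_value \<alpha> \<beta> \<rho> x0 = of_real \<alpha> * of_real x0 + of_real \<beta> + integral\<^sup>L \<rho> (nevanlinna_kernel (of_real x0))"

lemma nevanlinna_rep_kernel:
  assumes "nevanlinna_rep f \<alpha> \<beta> \<rho>" "Im z > 0"
  shows "f z = of_real \<alpha> * z + of_real \<beta> + integral\<^sup>L \<rho> (nevanlinna_kernel z)"
  using assms unfolding nevanlinna_rep_def upper_half_def nevanlinna_kernel_def[abs_def] by auto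

lemma nevanlinna_rep_expansion:
  assumes rep: "nevanlinna_rep f \<alpha> \<beta> \<rho>" and e: "e > 0"
    and null: "emeasure \<rho> {x0 - e<..<x0 + e} = 0" and z: "Im z > 0"
  shows "f z = rep_value \<alpha> \<beta> \<rho> x0 + (z - of_real x0) * (of_real \<alpha> + integral\<^sup>L \<rho> (difference_kernel x0 z))"
proof -
  have fin: "finite_measure \<rho>" and sets: "sets \<rho> = sets borel" using rep by (auto simp: nevanlinna_rep_def)
  have "integral\<^sup>L \<rho> (nevanlinna_kernel z) - integral\<^sup>L \<rho> (nevanlinna_kernel (of_real x0))
      = integral\<^sup>L \<rho> (\<lambda>t. nevanlinna_kernel z t - nevanlinna_kernel (of_real x0) t)"
    using integrable_nevanlinna_kernel[OF fin sets z] integrable_nevanlinna_kernel_real[OF fin sets e null]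
    by simp
  also have "\<dots> = integral\<^sup>L \<rho> (\<lambda>t. (z - of_real x0) * difference_kernel x0 z t)"
  proof (rule integral_cong_AE)
    show "AE t in \<rho>. nevanlinna_kernel z t - nevanlinna_kernel (of_real x0) t = (z - of_real x0) * difference_kernel x0 z t"
      using AE_outside_null_interval[OF sets null]
      by (rule eventually_mono) (use e z in \<open>auto intro!: nevanlinna_kernel_diff\<close>)
  qed (auto intro!: measurable_if_sets_borel[OF sets])
  also have "\<dots> = (z - of_real x0) * integral\<^sup>L \<rho> (difference_kernel x0 z)" by simp
  finally show ?thesis
    using nevanlinna_rep_kernel[OF rep z] by (simp add: rep_value_def algebra_simps)
qed

lemma tendsto_rep_value:
  assumes rep: "nevanlinna_rep f \<alpha> \<beta> \<rho>" and e: "e > 0"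
    and null: "emeasure \<rho> {x0 - e<..<x0 + e} = 0"
  shows "(f \<longlongrightarrow> rep_value \<alpha> \<beta> \<rho> x0) (at (of_real x0) within upper_half)"
proof -
  have fin: "finite_measure \<rho>" and sets: "sets \<rho> = sets borel" and \<alpha>: "\<alpha> \<ge> 0"
    using rep by (auto simp: nevanlinna_rep_def)
  define K where "K = 2 * ((1 + 2 * x0^2) / e^2 + 2)"
  define C where "C = \<alpha> + K * measure \<rho> (space \<rho>)"
  have "eventually (\<lambda>z. norm (f z - rep_value \<alpha> \<beta> \<rho> x0) \<le> C * cmod (z - of_real x0))
      (at (of_real x0) within upper_half)"
    unfolding eventually_at
  proof (intro exI[of _ "e / 2"] conjI ballI impI)
    fix z assume "z \<in> upper_half" "z \<noteq> of_real x0 \<and> dist z (of_real x0) < e / 2"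
    then have z: "Im z > 0" and near: "cmod (z - of_real x0) \<le> e / 2"
      by (auto simp: upper_half_def dist_norm)
    have "norm (integral\<^sup>L \<rho> (difference_kernel x0 z)) \<le> K * measure \<rho> (space \<rho>)"
      using AE_outside_null_interval[OF sets null] norm_difference_kernel_le[OF e _ near]
        integrable_difference_kernel[OF fin sets e null z]
      by (intro norm_integral_le_AE_bound[OF fin]) (auto elim!: eventually_mono simp: K_def)
    then have "norm (of_real \<alpha> + integral\<^sup>L \<rho> (difference_kernel x0 z)) \<le> C"
      using norm_triangle_ineq[of "of_real \<alpha>" "integral\<^sup>L \<rho> (difference_kernel x0 z)"] \<alpha>
      by (simp add: C_def)
    then have "cmod (z - of_real x0) * norm (of_real \<alpha> + integral\<^sup>L \<rho> (difference_kernel x0 z))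
        \<le> C * cmod (z - of_real x0)"
      by (metis mult.commute mult_left_mono norm_ge_zero)
    then show "norm (f z - rep_value \<alpha> \<beta> \<rho> x0) \<le> C * cmod (z - of_real x0)"
      using nevanlinna_rep_expansion[OF rep e null z] by (simp add: norm_mult)
  qed (use e in simp)
  moreover have "((\<lambda>z. C * cmod (z - of_real x0)) \<longlongrightarrow> 0) (at (of_real x0) within upper_half)"
    by (rule tendsto_eq_intros) (auto intro!: tendsto_eq_intros)
  ultimately show ?thesis unfolding Lim_null[of f] by (rule Lim_null_comparison)
qed

lemma ext_val_rep_value:
  assumes rep: "nevanlinna_rep f \<alpha> \<beta> \<rho>" and e: "e > 0"
    and null: "emeasure \<rho> {x0 - e<..<x0 + e} = 0"
  shows "ext_val f (Some x0) = rep_value \<alpha> \<beta> \<rho> x0"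
proof -
  have "of_real x0 islimpt upper_half"
  proof (rule islimptI)
    fix T :: "complex set" assume "of_real x0 \<in> T" "open T"
    then obtain r where r: "r > 0" "ball (of_real x0) r \<subseteq> T" by (meson openE)
    then have "of_real x0 + \<i> * of_real (r / 2) \<in> T"
      by (auto simp: dist_norm norm_mult)
    moreover have "of_real x0 + \<i> * of_real (r / 2) \<in> upper_half" "of_real x0 + \<i> * of_real (r / 2) \<noteq> of_real x0"
      using r by (simp_all add: upper_half_def complex_eq_iff)
    ultimately show "\<exists>y\<in>upper_half. y \<in> T \<and> y \<noteq> of_real x0" by blast
  qed
  then have "at (of_real x0) within upper_half \<noteq> bot" by (simp add: trivial_limit_within)
  then show ?thesis unfolding ext_val_def using tendsto_Lim tendsto_rep_value[OF assms] by simp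
qed

section \<open>Positivity off the negative arc\<close>

lemma Im_affine_mult_difference_kernel_nonneg:
  fixes a b t x0 :: real
  assumes sign: "(a * t + b) * (t - x0) \<ge> 0" and z: "Im z > 0"
  shows "Im ((of_real a * z + of_real b) * difference_kernel x0 z t) \<ge> 0"
proof -
  have "(1 + t^2) / (t - x0) * (a * t + b) \<ge> 0"
  proof (cases t x0 rule: linorder_cases)
    case greater
    then have "a * t + b \<ge> 0" using sign by (simp add: zero_le_mult_iff)
    then show ?thesis using greater by (simp add: add_nonneg_nonneg)
  next
    case less
    then have "a * t + b \<le> 0" using sign by (simp add: zero_le_mult_iff)
    moreover have "(1 + t^2) / (t - x0) \<le> 0" using less by (simp add: divide_nonneg_neg add_nonneg_nonneg)
    ultimately show ?thesis by (intro mult_nonpos_nonpos)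
  qed simp
  then have "((1 + t^2) / (t - x0) * (a * t + b)) * (Im z / (cmod (of_real t - z))^2) \<ge> 0"
    by (rule mult_nonneg_nonneg) (use z in simp)
  then show ?thesis unfolding Im_affine_mult_difference_kernel by (simp add: mult_ac)
qed

text \<open>The three terms of nevanlinna_rep_expansion, multiplied by (a z + b) / (z - x0), each have
  nonnegative imaginary part: the first because rep_value is a nonpositive real, the second by
  the sign of \<alpha> * a, the third pointwise on the support of \<rho>.\<close>

lemma Im_mult_affine_div_nonneg:
  fixes a b :: real
  assumes rep: "nevanlinna_rep f \<alpha> \<beta> \<rho>" and e: "e > 0"
    and null: "emeasure \<rho> {x0 - e<..<x0 + e} = 0" and z: "Im z > 0"
    and value_Im: "Im (rep_value \<alpha> \<beta> \<rho> x0) = 0" and value_Re: "Re (rep_value \<alpha> \<beta> \<rho> x0) \<le> 0"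
    and \<alpha>_a: "\<alpha> * a \<ge> 0" and x0: "a * x0 + b \<ge> 0"
    and sign: "AE t in \<rho>. (a * t + b) * (t - x0) \<ge> 0"
  shows "Im (f z * (of_real a * z + of_real b) / (z - of_real x0)) \<ge> 0"
proof -
  have fin: "finite_measure \<rho>" and sets: "sets \<rho> = sets borel"
    using rep by (auto simp: nevanlinna_rep_def)
  define q where "q = of_real a * z + of_real b"
  define r where "r = Re (rep_value \<alpha> \<beta> \<rho> x0)"
  have "rep_value \<alpha> \<beta> \<rho> x0 = of_real r" using value_Im by (simp add: r_def complex_eq_iff)
  moreover have "z - of_real x0 \<noteq> 0" using z by auto
  moreover note int_D = integrable_difference_kernel[OF fin sets e null z]
  ultimately have expansion: "f z * q / (z - of_real x0) = of_real r * (q / (z - of_real x0)) + of_real \<alpha> * q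
      + integral\<^sup>L \<rho> (\<lambda>t. q * difference_kernel x0 z t)"
    unfolding nevanlinna_rep_expansion[OF rep e null z] by (simp add: field_simps)
  have "q / (z - of_real x0) = - (q / (of_real x0 - z))" by (metis minus_diff_eq minus_divide_right)
  then have "Im (q / (z - of_real x0)) = - ((a * x0 + b) * Im z / (cmod (of_real x0 - z))^2)"
    using Im_affine_div_real_minus[of a z b x0] by (simp add: q_def)
  then have "Im (q / (z - of_real x0)) \<le> 0" using x0 z by simp
  then have "Im (of_real r * (q / (z - of_real x0))) \<ge> 0"
    using value_Re unfolding Im_of_real_mult r_def by (intro mult_nonpos_nonpos)
  moreover have "Im (of_real \<alpha> * q) \<ge> 0"
    using mult_nonneg_nonneg[OF \<alpha>_a less_imp_le[OF z]] unfolding q_def by (simp add: mult_ac)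
  moreover have "integral\<^sup>L \<rho> (\<lambda>t. Im (q * difference_kernel x0 z t)) \<ge> 0"
    using sign by (rule integral_nonneg_AE[OF eventually_mono])
      (unfold q_def, rule Im_affine_mult_difference_kernel_nonneg[OF _ z])
  then have "Im (integral\<^sup>L \<rho> (\<lambda>t. q * difference_kernel x0 z t)) \<ge> 0"
    using integral_Im[of \<rho> "\<lambda>t. q * difference_kernel x0 z t"] int_D by simp
  ultimately show ?thesis using expansion unfolding q_def by simp
qed

section \<open>Division by p_J\<close>

lemma Im_div_real_minus_at_left:
  fixes w z :: complex
  assumes z: "Im z > 0" and ev: "eventually (\<lambda>x. Im (w / (z - of_real x)) \<ge> 0) (at_left d)"
  shows "Im (w / (z - of_real d)) \<ge> 0"
proof (rule tendsto_lowerbound[OF _ ev])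
  have "z - of_real d \<noteq> 0" using z by auto
  then show "((\<lambda>x. Im (w / (z - of_real x))) \<longlongrightarrow> Im (w / (z - of_real d))) (at_left d)"
    by (intro tendsto_intros) auto
qed simp

lemma Im_mult_real_div_real_minus_at_top:
  fixes w z :: complex
  assumes z: "Im z > 0" and ev: "eventually (\<lambda>x. Im (w * of_real x / (z - of_real x)) \<ge> 0) at_top"
  shows "Im (- w) \<ge> 0"
proof (rule tendsto_lowerbound[OF _ ev])
  have "((\<lambda>x::real. of_real (inverse x) :: complex) \<longlongrightarrow> of_real 0) at_top"
    by (intro tendsto_of_real tendsto_inverse_0_at_top filterlim_ident)
  then have "((\<lambda>x::real. w / (z * of_real (inverse x) - 1)) \<longlongrightarrow> w / (z * 0 - 1)) at_top"
    by (intro tendsto_intros) auto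
  moreover have "eventually (\<lambda>x::real. w / (z * of_real (inverse x) - 1) = w * of_real x / (z - of_real x)) at_top"
    using eventually_gt_at_top[of 0]
  proof (rule eventually_mono)
    fix x :: real assume "x > 0"
    moreover have "z - of_real x \<noteq> 0" using z by auto
    ultimately show "w / (z * of_real (inverse x) - 1) = w * of_real x / (z - of_real x)"
      by (simp add: field_simps)
  qed
  ultimately have "((\<lambda>x::real. w * of_real x / (z - of_real x)) \<longlongrightarrow> - w) at_top"
    using tendsto_cong by fastforce
  then show "((\<lambda>x. Im (w * of_real x / (z - of_real x))) \<longlongrightarrow> Im (- w)) at_top"
    by (intro tendsto_intros)
qed simp

lemma norm_i_minus_real_pos: "cmod (\<i> - of_real c) > 0"
  by (simp add: complex_eq_iff)

lemma holomorphic_on_pJ: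
  assumes "c \<noteq> d"
  shows "pJ c d holomorphic_on upper_half"
proof -
  have [simp]: "z - of_real a \<noteq> 0" "z \<noteq> of_real a" if "z \<in> upper_half" for z a
    using that by (auto simp: upper_half_def)
  have [simp]: "complex_of_real (cmod (\<i> - of_real a)) \<noteq> 0" for a
    using norm_i_minus_real_pos[of a] by simp
  show ?thesis
  proof (cases c; cases d)
    fix b assume "c = None" "d = Some b"
    then show ?thesis by (simp only:) (unfold pJ.simps, auto intro!: holomorphic_intros)
  next
    fix a assume "c = Some a" "d = None"
    then show ?thesis by (simp only:) (unfold pJ.simps, auto intro!: holomorphic_intros)
  next
    fix a b assume "c = Some a" "d = Some b"
    then show ?thesis by (simp only:) (unfold pJ.simps, cases "a < b"; auto intro!: holomorphic_intros)
  qed (use assms in simp)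
qed

lemma pJ_nonzero:
  assumes "c \<noteq> d" "Im z > 0"
  shows "pJ c d z \<noteq> 0"
  using assms norm_i_minus_real_pos by (cases c; cases d) auto

lemma nonneg_mult_outside_interval:
  fixes t x a b :: real
  assumes "t \<notin> {a<..<b}" "a < x" "x < b"
  shows "(t - a) * (t - x) \<ge> 0"
proof (cases "t \<le> a")
  case True
  then show ?thesis using assms by (intro mult_nonpos_nonpos) auto
next
  case False
  then show ?thesis using assms by (intro mult_nonneg_nonneg) auto
qed

locale negative_arc =
  fixes f :: "complex \<Rightarrow> complex" and \<alpha> \<beta> :: real and \<rho> :: "real measure" and c d :: "real option"
  assumes rep: "nevanlinna_rep f \<alpha> \<beta> \<rho>"
    and support_off_arc: "\<And>t. t \<in> measure_support \<rho> \<Longrightarrow> Some t \<notin> arc c d"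
    and alpha_eq_0: "None \<in> arc c d \<Longrightarrow> \<alpha> = 0"
    and negative_on_arc: "\<And>x. Some x \<in> arc c d \<Longrightarrow> Im (ext_val f (Some x)) = 0 \<and> Re (ext_val f (Some x)) < 0"
begin

lemma alpha_nonneg: "\<alpha> \<ge> 0"
  using rep by (simp add: nevanlinna_rep_def)

lemma Im_mult_affine_div_arc_nonneg:
  fixes a b :: real
  assumes x0: "Some x0 \<in> arc c d" and z: "Im z > 0"
    and \<alpha>_a: "\<alpha> * a \<ge> 0" and "a * x0 + b \<ge> 0"
    and sign: "\<And>t. Some t \<notin> arc c d \<Longrightarrow> (a * t + b) * (t - x0) \<ge> 0"
  shows "Im (f z * (of_real a * z + of_real b) / (z - of_real x0)) \<ge> 0"
proof -
  have sets: "sets \<rho> = sets borel" using rep by (simp add: nevanlinna_rep_def)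
  have "x0 \<notin> measure_support \<rho>" using support_off_arc x0 by blast
  then obtain e where e: "e > 0" "emeasure \<rho> {x0 - e<..<x0 + e} = 0"
    by (auto simp: measure_support_def not_gr_zero)
  have "ext_val f (Some x0) = rep_value \<alpha> \<beta> \<rho> x0" by (rule ext_val_rep_value[OF rep e])
  then have "Im (rep_value \<alpha> \<beta> \<rho> x0) = 0" "Re (rep_value \<alpha> \<beta> \<rho> x0) \<le> 0"
    using negative_on_arc[OF x0] by auto
  moreover have "AE t in \<rho>. (a * t + b) * (t - x0) \<ge> 0"
    using AE_in_measure_support[OF sets] by (rule eventually_mono) (use support_off_arc sign in blast)
  ultimately show ?thesis using Im_mult_affine_div_nonneg[OF rep e z] \<alpha>_a assms(4) by blast
qed

lemma Im_mult_affine_div_right_end_nonneg: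
  fixes a b :: real
  assumes z: "Im z > 0" and "e < d'" and inside: "\<And>x. e < x \<Longrightarrow> x < d' \<Longrightarrow> Some x \<in> arc c d"
    and \<alpha>_a: "\<alpha> * a \<ge> 0" and pos: "\<And>x. e < x \<Longrightarrow> x < d' \<Longrightarrow> a * x + b \<ge> 0"
    and sign: "\<And>x t. e < x \<Longrightarrow> x < d' \<Longrightarrow> Some t \<notin> arc c d \<Longrightarrow> (a * t + b) * (t - x) \<ge> 0"
  shows "Im (f z * (of_real a * z + of_real b) / (z - of_real d')) \<ge> 0"
proof (rule Im_div_real_minus_at_left[OF z])
  show "eventually (\<lambda>x. Im (f z * (of_real a * z + of_real b) / (z - of_real x)) \<ge> 0) (at_left d')"
    using eventually_at_left_real[OF \<open>e < d'\<close>]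
  proof (rule eventually_mono)
    fix x assume "x \<in> {e<..<d'}"
    then show "Im (f z * (of_real a * z + of_real b) / (z - of_real x)) \<ge> 0"
      using sign[of x] by (intro Im_mult_affine_div_arc_nonneg[OF inside z \<alpha>_a pos]) auto
  qed
qed

text \<open>In each case p_J z is a positive multiple of (z - d') / (a z + b), with a z + b vanishing at the
  left end of J (at \<infinity> if J is unbounded below).\<close>

lemma Im_div_pJ_nonneg_finite_end:
  assumes d: "d = Some d'" and "c \<noteq> d" and z: "Im z > 0"
  shows "Im (f z / pJ c d z) \<ge> 0"
proof -
  have z_minus: "z - of_real x \<noteq> 0" for x using z by auto
  have k: "cmod (\<i> - of_real x) > 0" for x by (rule norm_i_minus_real_pos)
  consider "c = None" | c' where "c = Some c'" "c' < d'" | c' where "c = Some c'" "d' < c'"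
    using \<open>c \<noteq> d\<close> d by (cases c) force+
  then show ?thesis
  proof cases
    case 1
    have "Im (f z * (of_real 0 * z + of_real 1) / (z - of_real d')) \<ge> 0"
      by (rule Im_mult_affine_div_right_end_nonneg[OF z, of "d' - 1"]) (use 1 d in auto)
    moreover have "f z / pJ c d z = of_real (cmod (\<i> - of_real d')) * (f z * (of_real 0 * z + of_real 1) / (z - of_real d'))"
      using 1 d k[of d'] z_minus[of d'] by (simp add: field_simps)
    ultimately show ?thesis using k[of d'] by (simp only: Im_of_real_mult) simp
  next
    case 2
    have "Im (f z * (of_real 1 * z + of_real (- c')) / (z - of_real d')) \<ge> 0"
      by (rule Im_mult_affine_div_right_end_nonneg[OF z, of c'])
        (use 2 d alpha_nonneg in \<open>auto intro!: nonneg_mult_outside_interval simp: image_iff\<close>)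
    moreover have "f z / pJ c d z = of_real (cmod (\<i> - of_real d') / cmod (\<i> - of_real c'))
        * (f z * (of_real 1 * z + of_real (- c')) / (z - of_real d'))"
      using 2 d k[of c'] k[of d'] z_minus[of c'] z_minus[of d'] by (simp add: field_simps)
    ultimately show ?thesis using k[of c'] k[of d'] by (simp only: Im_of_real_mult) simp
  next
    case 3
    then have "\<alpha> = 0" using d by (intro alpha_eq_0) simp
    have "Im (f z * (of_real (- 1) * z + of_real c') / (z - of_real d')) \<ge> 0"
      by (rule Im_mult_affine_div_right_end_nonneg[OF z, of "d' - 1"])
        (use 3 d \<open>\<alpha> = 0\<close> in \<open>auto intro!: mult_nonneg_nonneg\<close>)
    moreover have "f z / pJ c d z = of_real (cmod (\<i> - of_real d') / cmod (\<i> - of_real c'))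
        * (f z * (of_real (- 1) * z + of_real c') / (z - of_real d'))"
      using 3 d k[of c'] k[of d'] z_minus[of c'] z_minus[of d'] by (simp add: field_simps)
    ultimately show ?thesis using k[of c'] k[of d'] by (simp only: Im_of_real_mult) simp
  qed
qed

text \<open>Here x0 \<rightarrow> \<infinity> inside J; the factor x0 compensates the decay of 1 / (z - x0).\<close>

lemma Im_div_pJ_nonneg_infinite_end:
  assumes c: "c = Some c'" and d: "d = None" and z: "Im z > 0"
  shows "Im (f z / pJ c d z) \<ge> 0"
proof -
  have "eventually (\<lambda>x. Im (f z * (z - of_real c') * of_real x / (z - of_real x)) \<ge> 0) at_top"
    using eventually_gt_at_top[of "max c' 0"]
  proof (rule eventually_mono)
    fix x0 assume x0: "x0 > max c' 0"
    have "Im (f z * (of_real 1 * z + of_real (- c')) / (z - of_real x0)) \<ge> 0"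
      by (rule Im_mult_affine_div_arc_nonneg[OF _ z])
        (use x0 c d alpha_nonneg in \<open>auto intro!: mult_nonpos_nonpos\<close>)
    then have "x0 * Im (f z * (z - of_real c') / (z - of_real x0)) \<ge> 0" using x0 by simp
    then show "Im (f z * (z - of_real c') * of_real x0 / (z - of_real x0)) \<ge> 0"
      by (simp only: Im_of_real_mult[symmetric]) (simp add: ac_simps)
  qed
  then have "Im (- (f z * (z - of_real c'))) \<ge> 0" by (rule Im_mult_real_div_real_minus_at_top[OF z])
  moreover have "f z / pJ c d z = of_real (1 / cmod (\<i> - of_real c')) * (- (f z * (z - of_real c')))"
    using c d norm_i_minus_real_pos[of c'] z by (auto simp: field_simps)
  ultimately show ?thesis using norm_i_minus_real_pos[of c'] by (simp only: Im_of_real_mult) simp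
qed

lemma Im_div_pJ_nonneg:
  assumes "c \<noteq> d" "Im z > 0"
  shows "Im (f z / pJ c d z) \<ge> 0"
  using assms Im_div_pJ_nonneg_finite_end Im_div_pJ_nonneg_infinite_end
  by (cases c; cases d) auto

end

lemma negative_arc_if_arc_in_Omega:
  assumes f: "nevanlinna_class f" and arc: "arc c d \<subseteq> Omega_set f"
    and neg: "\<forall>x\<in>arc c d. Im (ext_val f x) = 0 \<and> Re (ext_val f x) < 0"
  obtains \<alpha> \<beta> \<rho> where "negative_arc f \<alpha> \<beta> \<rho> c d"
proof -
  obtain \<alpha> \<beta> \<rho> where rep: "nevanlinna_rep f \<alpha> \<beta> \<rho>" and sigma: "sigma_set f = Some ` measure_support \<rho> \<union>
       (if \<alpha> > 0 \<or> \<not> bounded (measure_support \<rho>) then {None} else {})"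
    using sigma_set_rep[OF f] by blast
  have "None \<in> arc c d \<Longrightarrow> \<alpha> = 0"
    using arc sigma rep by (auto simp: Omega_set_def nevanlinna_rep_def split: if_splits)
  moreover have "Some t \<notin> arc c d" if "t \<in> measure_support \<rho>" for t
    using arc sigma that by (auto simp: Omega_set_def)
  ultimately have "negative_arc f \<alpha> \<beta> \<rho> c d"
    using rep neg by unfold_locales auto
  then show ?thesis by (rule that)
qed

theorem lemma4p1:
  fixes f :: "complex \<Rightarrow> complex" and c d :: "real option"
  assumes "nevanlinna_class f"
    and "\<exists>z\<in>upper_half. f z \<noteq> 0"
    and "c \<noteq> d"
    and "arc c d \<subseteq> Omega_set f"
    and "\<forall>x\<in>arc c d. Im (ext_val f x) = 0 \<and> Re (ext_val f x) < 0"
  shows "\<exists>g. nevanlinna_class g \<and> (\<forall>z\<in>upper_half. f z = pJ c d z * g z)"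
proof -
  obtain \<alpha> \<beta> \<rho> where "negative_arc f \<alpha> \<beta> \<rho> c d"
    using negative_arc_if_arc_in_Omega assms(1,4,5) by blast
  then have "Im (f z / pJ c d z) \<ge> 0" if "z \<in> upper_half" for z
    using negative_arc.Im_div_pJ_nonneg assms(3) that by (simp add: upper_half_def)
  moreover have "(\<lambda>z. f z / pJ c d z) holomorphic_on upper_half"
    using assms(1) holomorphic_on_pJ[OF assms(3)] pJ_nonzero[OF assms(3)]
    by (intro holomorphic_on_divide) (auto simp: nevanlinna_class_def upper_half_def)
  moreover have "f z = pJ c d z * (f z / pJ c d z)" if "z \<in> upper_half" for z
    using pJ_nonzero[OF assms(3)] that by (simp add: upper_half_def)
  ultimately show ?thesis unfolding nevanlinna_class_def by blast
qed

end
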